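(* Let $\alpha>0$, $A\ge0$, $B>0$, $t>0$, and let $P_n(x,t)$ be the monic polynomials orthogonal on $[0,\infty)$ w.r.t. $w(x,t)=x^\alpha e^{-x}(A+B\theta(x-t))$, with norms $h_n(t)$. Let $R_n(t)=Bt^\alpha e^{-t}\{P_n(t,t)\}^2/h_n(t)$, $r_n(t)=Bt^\alpha e^{-t}P_n(t,t)P_{n-1}(t,t)/h_{n-1}(t)$, $D_n(t)=\prod_{j=0}^{n-1}h_j(t)$ ($D_0=1$) and $H_n(t)=t\frac{d}{dt}\ln D_n(t)$. Then for $n\ge1$ (whenever the denominators are nonzero) $$tR_n=H_n-H_{n+1},$$ $$t\,r_n=\frac{[H_n-n(n+\alpha)](t+H_{n+1}-H_{n-1})+t\,n(n+\alpha)}{t+H_{n+1}-H_{n-1}-2n-\alpha},$$ and $$(t\,r_n)^2=\left[n(n+\alpha)+t\,r_n-H_n\right]\left[(tR_n)^2+tR_n(H_{n+1}+H_{n-1}-2H_n)\right];$$ substituting the first two formulas into the third yields a second-order difference equation in $n$ for $H_n$.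
   Context: $\theta$ is the Heaviside function ($1$ for $x>0$, $0$ otherwise); $P_n(t,t)$ is $P_n(x,t)$ at $x=t$. *)

theory Defs
  imports "HOL-Analysis.Analysis" "HOL-Computational_Algebra.Polynomial"
begin

definition heaviside :: "real \<Rightarrow> real" where
  "heaviside x = (if x > 0 then 1 else 0)"

definition weight :: "real \<Rightarrow> real \<Rightarrow> real \<Rightarrow> real \<Rightarrow> real \<Rightarrow> real" where
  "weight \<alpha> A B t x = x powr \<alpha> * exp (- x) * (A + B * heaviside (x - t))"

definition wip :: "real \<Rightarrow> real \<Rightarrow> real \<Rightarrow> real \<Rightarrow> real poly \<Rightarrow> real poly \<Rightarrow> real" where
  "wip \<alpha> A B t p q = (LINT x:{0..}|lborel. poly p x * poly q x * weight \<alpha> A B t x)"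

definition is_monic_OP :: "real \<Rightarrow> real \<Rightarrow> real \<Rightarrow> real \<Rightarrow> nat \<Rightarrow> real poly \<Rightarrow> bool" where
  "is_monic_OP \<alpha> A B t n p \<longleftrightarrow> degree p = n \<and> lead_coeff p = 1 \<and>
     (\<forall>q. degree q < n \<longrightarrow> wip \<alpha> A B t p q = 0)"

definition OP :: "real \<Rightarrow> real \<Rightarrow> real \<Rightarrow> real \<Rightarrow> nat \<Rightarrow> real poly" where
  "OP \<alpha> A B t n = (THE p. is_monic_OP \<alpha> A B t n p)"

definition Pn :: "real \<Rightarrow> real \<Rightarrow> real \<Rightarrow> nat \<Rightarrow> real \<Rightarrow> real \<Rightarrow> real" where
  "Pn \<alpha> A B n x t = poly (OP \<alpha> A B t n) x"

definition hn :: "real \<Rightarrow> real \<Rightarrow> real \<Rightarrow> nat \<Rightarrow> real \<Rightarrow> real" where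
  "hn \<alpha> A B n t = wip \<alpha> A B t (OP \<alpha> A B t n) (OP \<alpha> A B t n)"

definition Rn :: "real \<Rightarrow> real \<Rightarrow> real \<Rightarrow> nat \<Rightarrow> real \<Rightarrow> real" where
  "Rn \<alpha> A B n t = B * t powr \<alpha> * exp (- t) * (Pn \<alpha> A B n t t)\<^sup>2 / hn \<alpha> A B n t"

definition rn :: "real \<Rightarrow> real \<Rightarrow> real \<Rightarrow> nat \<Rightarrow> real \<Rightarrow> real" where
  "rn \<alpha> A B n t = B * t powr \<alpha> * exp (- t) * Pn \<alpha> A B n t t * Pn \<alpha> A B (n - 1) t t
      / hn \<alpha> A B (n - 1) t"

definition Dn :: "real \<Rightarrow> real \<Rightarrow> real \<Rightarrow> nat \<Rightarrow> real \<Rightarrow> real" where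
  "Dn \<alpha> A B n t = (\<Prod>j<n. hn \<alpha> A B j t)"

definition Hn :: "real \<Rightarrow> real \<Rightarrow> real \<Rightarrow> nat \<Rightarrow> real \<Rightarrow> real" where
  "Hn \<alpha> A B n t = t * deriv (\<lambda>s. ln (Dn \<alpha> A B n s)) t"

end

theory Submission
  imports Defs "HOL-Real_Asymp.Real_Asymp"
begin

text \<open>
  The moments \<open>\<mu>\<^sub>k(t)\<close> of \<open>w(x,t)\<close> satisfy \<open>\<mu>\<^sub>k\<^sub>+\<^sub>1 = (k + \<alpha> + 1) \<mu>\<^sub>k + c t\<^sup>k\<^sup>+\<^sup>1\<close>, where
  \<open>c = B t\<^sup>\<alpha> e\<^sup>-\<^sup>t\<close> comes from the jump of the weight at \<open>t\<close>. Tested against the orthogonal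
  polynomials, this recurrence yields the subleading coefficient \<open>p(n) = H\<^sub>n - n(n + \<alpha>)\<close> and
  \<open>p(n) + \<beta>\<^sub>n = t r\<^sub>n\<close> with \<open>\<beta>\<^sub>n = h\<^sub>n / h\<^sub>n\<^sub>-\<^sub>1\<close>. It also shows that the lowering and raising
  combinations \<open>x P\<^sub>n' - n P\<^sub>n - \<beta>\<^sub>n P\<^sub>n\<^sub>-\<^sub>1\<close> and \<open>x P\<^sub>n\<^sub>-\<^sub>1' - x P\<^sub>n\<^sub>-\<^sub>1 + P\<^sub>n + (n + \<alpha>) P\<^sub>n\<^sub>-\<^sub>1\<close>
  represent evaluation at \<open>t\<close> on polynomials of degree \<open>< n\<close>, so both are multiples of the
  Christoffel--Darboux kernel \<open>K\<^sub>n\<^sub>-\<^sub>1(x, t)\<close>. Evaluating at \<open>x = 0\<close>, where \<open>P\<^sub>n(0) \<noteq> 0\<close>, and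
  eliminating \<open>P\<^sub>n(0) / P\<^sub>n\<^sub>-\<^sub>1(0)\<close> gives \<open>n(n + \<alpha>) + r\<^sub>n(2n + \<alpha>) = \<beta>\<^sub>n (1 - R\<^sub>n - R\<^sub>n\<^sub>-\<^sub>1)\<close>,
  while \<open>r\<^sub>n\<^sup>2 = \<beta>\<^sub>n R\<^sub>n R\<^sub>n\<^sub>-\<^sub>1\<close> holds by definition. Finally \<open>h\<^sub>j'(t) = -c P\<^sub>j(t,t)\<^sup>2\<close>, read off
  from the extremal property of \<open>h\<^sub>j\<close>, gives \<open>H\<^sub>n = -t (R\<^sub>0 + \<dots> + R\<^sub>n\<^sub>-\<^sub>1)\<close>, and the three identities
  become algebra.
\<close>

lemma degree_less_or_zero: "degree p \<le> m \<Longrightarrow> coeff p m = 0 \<Longrightarrow> p = 0 \<or> degree p < m"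
  by (metis leading_coeff_0_iff le_neq_implies_less)

lemma degree_le_Suc_coeff_0: "degree p \<le> Suc k \<Longrightarrow> coeff p (Suc k) = 0 \<Longrightarrow> degree p \<le> k"
  using degree_less_or_zero[of p "Suc k"] by auto

lemma coeff_pCons_0_pderiv: "coeff (pCons 0 (pderiv f)) i = real i * coeff f i"
  by (cases i) (auto simp: coeff_pderiv)

lemma degree_pCons_0_pderiv_le: "degree (pCons 0 (pderiv f)) \<le> degree (f :: real poly)"
proof (cases "pderiv f = 0")
  case False
  then have "degree f > 0"
    using pderiv_eq_0_iff by force
  then show ?thesis
    using False degree_pderiv[of f] by simp
qed simp

section \<open>Moment functionals and their orthogonal polynomials\<close>

definition moment_functional :: "(nat \<Rightarrow> real) \<Rightarrow> real poly \<Rightarrow> real" where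
  "moment_functional \<mu> p = (\<Sum>i\<le>degree p. coeff p i * \<mu> i)"

lemma moment_functional_eq_sum:
  "degree p \<le> N \<Longrightarrow> moment_functional \<mu> p = (\<Sum>i\<le>N. coeff p i * \<mu> i)"
  unfolding moment_functional_def by (rule sum.mono_neutral_left) (auto simp: coeff_eq_0)

lemma moment_functional_0 [simp]: "moment_functional \<mu> 0 = 0"
  by (simp add: moment_functional_def)

lemma moment_functional_add: "moment_functional \<mu> (p + q) = moment_functional \<mu> p + moment_functional \<mu> q"
proof -
  define N where "N = max (degree p) (degree q)"
  have "degree p \<le> N" "degree q \<le> N" "degree (p + q) \<le> N"
    unfolding N_def by (auto intro: degree_add_le)
  then show ?thesis
    by (simp add: moment_functional_eq_sum[of _ N] distrib_right sum.distrib)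
qed

lemma moment_functional_smult: "moment_functional \<mu> (smult c p) = c * moment_functional \<mu> p"
  using degree_smult_le[of c p]
  by (simp add: moment_functional_eq_sum[of _ "degree p"] sum_distrib_left mult.assoc)

lemma moment_functional_diff: "moment_functional \<mu> (p - q) = moment_functional \<mu> p - moment_functional \<mu> q"
  using moment_functional_add[of \<mu> p "-q"] moment_functional_smult[of \<mu> "-1" q] by simp

lemma moment_functional_sum:
  "moment_functional \<mu> (\<Sum>j\<in>S. f j) = (\<Sum>j\<in>S. moment_functional \<mu> (f j))"
  by (induction S rule: infinite_finite_induct) (auto simp: moment_functional_add)

lemmas moment_functional_linear =
  moment_functional_add moment_functional_diff moment_functional_smult moment_functional_sum

fun orth_poly :: "(nat \<Rightarrow> real) \<Rightarrow> nat \<Rightarrow> real poly" where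
  "orth_poly \<mu> 0 = 1"
| "orth_poly \<mu> (Suc n) = monom 1 (Suc n) -
     (\<Sum>j\<le>n. smult (moment_functional \<mu> (monom 1 (Suc n) * orth_poly \<mu> j)
                     / moment_functional \<mu> (orth_poly \<mu> j * orth_poly \<mu> j)) (orth_poly \<mu> j))"

declare orth_poly.simps(2) [simp del]

lemma degree_orth_poly_le_and_monic: "degree (orth_poly \<mu> n) \<le> n \<and> coeff (orth_poly \<mu> n) n = 1"
proof (induction n rule: less_induct)
  case (less n)
  show ?case
  proof (cases n)
    case (Suc m)
    let ?S = "\<Sum>j\<le>m. smult (moment_functional \<mu> (monom 1 (Suc m) * orth_poly \<mu> j)
                 / moment_functional \<mu> (orth_poly \<mu> j * orth_poly \<mu> j)) (orth_poly \<mu> j)"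
    have "degree ?S \<le> m"
      using less Suc by (intro degree_sum_le order.trans[OF degree_smult_le]) (simp, meson atMost_iff le_imp_less_Suc le_trans)
    then show ?thesis
      using Suc by (auto simp: orth_poly.simps(2) coeff_diff coeff_eq_0 degree_monom_le
                         intro!: degree_diff_le)
  qed simp
qed

lemma degree_orth_poly [simp]: "degree (orth_poly \<mu> n) = n"
  using degree_orth_poly_le_and_monic[of \<mu> n] by (metis le_antisym le_degree zero_neq_one)

lemma coeff_orth_poly_degree [simp]: "coeff (orth_poly \<mu> n) n = 1"
  using degree_orth_poly_le_and_monic by blast

lemma orth_poly_nonzero: "orth_poly \<mu> n \<noteq> 0"
  by (metis coeff_orth_poly_degree coeff_0 zero_neq_one)

locale positive_moments =
  fixes \<mu> :: "nat \<Rightarrow> real"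
  assumes moment_functional_pos:
    "\<And>q. q \<noteq> 0 \<Longrightarrow> (\<forall>x\<ge>0. poly q x \<ge> 0) \<Longrightarrow> moment_functional \<mu> q > 0"
begin

abbreviation L where "L \<equiv> moment_functional \<mu>"
abbreviation P where "P \<equiv> orth_poly \<mu>"

definition h where "h n = L (P n * P n)"

lemma L_square_pos: "q \<noteq> 0 \<Longrightarrow> L (q * q) > 0"
  by (intro moment_functional_pos) auto

lemma h_pos: "h n > 0"
  unfolding h_def by (rule L_square_pos) (rule orth_poly_nonzero)

lemma L_orth_poly_orth_poly: "j < k \<Longrightarrow> L (P k * P j) = 0"
proof (induction k arbitrary: j rule: less_induct)
  case (less k)
  then obtain m where k: "k = Suc m" by (cases k) auto
  have orth: "L (P i * P j) = 0" if "i \<le> m" "i \<noteq> j" for i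
    using less.IH[of i j] less.IH[of j i] less.prems that k by (cases "i < j") (auto simp: mult.commute)
  let ?c = "\<lambda>i. L (monom 1 (Suc m) * P i) / L (P i * P i)"
  have "L (P k * P j) = L (monom 1 (Suc m) * P j) - (\<Sum>i\<le>m. ?c i * L (P i * P j))"
    by (simp add: k orth_poly.simps(2) left_diff_distrib sum_distrib_right moment_functional_linear)
  also have "(\<Sum>i\<le>m. ?c i * L (P i * P j)) = ?c j * L (P j * P j)"
    using less.prems k orth by (subst sum.remove[of _ j]) auto
  also have "\<dots> = L (monom 1 (Suc m) * P j)"
    using h_pos[of j] by (simp add: h_def)
  finally show ?case by simp
qed

lemma L_orth_poly_lower_degree: "degree q < k \<Longrightarrow> L (P k * q) = 0"
proof (induction "degree q" arbitrary: q rule: less_induct)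
  case less
  define r where "r = q - smult (coeff q (degree q)) (P (degree q))"
  have "degree r \<le> degree q" "coeff r (degree q) = 0"
    unfolding r_def by (auto intro!: degree_diff_le order.trans[OF degree_smult_le])
  then have "r = 0 \<or> degree r < degree q"
    by (rule degree_less_or_zero)
  then have "L (P k * r) = 0"
    using less by auto
  moreover have "q = smult (coeff q (degree q)) (P (degree q)) + r"
    by (simp add: r_def)
  ultimately show ?case
    using L_orth_poly_orth_poly[OF less.prems]
    by (metis add_0 moment_functional_add moment_functional_smult distrib_left mult_smult_right
        mult_zero_right)
qed

lemma L_orth_poly_degree_le: "degree q \<le> m \<Longrightarrow> L (P m * q) = coeff q m * h m"
proof -
  assume deg: "degree q \<le> m"
  define r where "r = q - smult (coeff q m) (P m)"
  have "degree r \<le> m" "coeff r m = 0"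
    unfolding r_def using deg by (auto intro!: degree_diff_le order.trans[OF degree_smult_le])
  then have "L (P m * r) = 0"
    using degree_less_or_zero L_orth_poly_lower_degree by fastforce
  moreover have "P m * q = smult (coeff q m) (P m * P m) + P m * r"
    by (simp add: r_def algebra_simps)
  ultimately show ?thesis
    by (simp add: h_def moment_functional_add moment_functional_smult)
qed

lemma L_vanishing_on_degree_le: "degree U \<le> m \<Longrightarrow> (\<And>g. degree g \<le> m \<Longrightarrow> L (U * g) = 0) \<Longrightarrow> U = 0"
  using L_square_pos[of U] by fastforce

lemma orth_poly_unique:
  assumes "degree p = n" "lead_coeff p = 1" "\<And>q. degree q < n \<Longrightarrow> L (p * q) = 0"
  shows "p = P n"
proof -
  define d where "d = p - P n"
  have "degree d \<le> n" "coeff d n = 0"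
    unfolding d_def using assms(1,2) by (auto intro: degree_diff_le)
  then have "d = 0 \<or> degree d < n"
    by (rule degree_less_or_zero)
  moreover have "L (d * g) = 0" if "degree g < n" for g
    using assms(3)[OF that] L_orth_poly_lower_degree[OF that]
    by (simp add: d_def left_diff_distrib moment_functional_diff)
  ultimately have "d = 0"
    using L_vanishing_on_degree_le[of d "degree d"] by auto
  then show ?thesis
    by (simp add: d_def)
qed

lemma h_le_monic: "degree p = n \<Longrightarrow> coeff p n = 1 \<Longrightarrow> h n \<le> L (p * p)"
proof -
  assume deg: "degree p = n" and monic: "coeff p n = 1"
  define d where "d = p - P n"
  have "degree d \<le> n" "coeff d n = 0"
    unfolding d_def using deg monic by (auto intro: degree_diff_le)
  then have "L (P n * d) = 0"
    using degree_less_or_zero L_orth_poly_lower_degree by fastforce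
  moreover have "p * p = P n * P n + (P n * d + P n * d) + d * d"
    by (simp add: d_def algebra_simps)
  moreover have "L (d * d) \<ge> 0"
    using L_square_pos[of d] by (cases "d = 0") auto
  ultimately show ?thesis
    unfolding h_def by (simp only: moment_functional_add)
qed

lemma poly_orth_poly_0_nonzero: "poly (P n) 0 \<noteq> 0"
proof
  assume "poly (P n) 0 = 0"
  then obtain S where S: "P n = pCons 0 S"
    by (metis pCons_cases poly_pCons mult_zero_left add_0_right)
  then have "S \<noteq> 0" "degree S < n"
    using orth_poly_nonzero[of \<mu> n] degree_orth_poly[of \<mu> n] by auto
  then have "L (pCons 0 (S * S)) > 0"
    by (intro moment_functional_pos) auto
  moreover have "L (P n * S) = 0"
    using L_orth_poly_lower_degree \<open>degree S < n\<close> by blast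
  ultimately show False
    using S by simp
qed

end

section \<open>Consequences of a Laguerre-type moment recurrence with a jump term\<close>

text \<open>The moments of \<open>x\<^sup>a e\<^sup>-\<^sup>x (A + B \<theta>(x - t))\<close> satisfy the recurrence below (integrate
  \<open>(x\<^sup>k\<^sup>+\<^sup>1 x\<^sup>a e\<^sup>-\<^sup>x)'\<close> against the weight); the constant \<open>c = B t\<^sup>a e\<^sup>-\<^sup>t\<close> is the jump
  term at \<open>t\<close>.\<close>
locale jump_laguerre_moments = positive_moments +
  fixes a t c :: real
  assumes moment_Suc: "\<And>k. \<mu> (Suc k) = (real k + a + 1) * \<mu> k + c * t ^ Suc k"
    and t_pos: "t > 0"
begin

text \<open>The Pearson equation in moment form: integrating \<open>(x f w)'\<close> by parts leaves only the
  contribution of the jump of \<open>w\<close> at \<open>t\<close>.\<close>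
lemma L_pearson: "L (pCons 0 (pderiv f) + smult (a + 1) f - pCons 0 f) = - t * c * poly f t"
proof -
  let ?D = "degree f"
  have deg: "degree (pCons 0 (pderiv f) + smult (a + 1) f - pCons 0 f) \<le> Suc ?D"
    using degree_pCons_0_pderiv_le[of f] degree_smult_le[of "a + 1" f] degree_pCons_le[of 0 f]
    by (intro degree_diff_le degree_add_le) auto
  have "L (pCons 0 (pderiv f) + smult (a + 1) f - pCons 0 f)
      = (\<Sum>i\<le>Suc ?D. (real i + a + 1) * coeff f i * \<mu> i) - (\<Sum>i\<le>Suc ?D. coeff (pCons 0 f) i * \<mu> i)"
    by (subst moment_functional_eq_sum[OF deg]) (simp add: coeff_pCons_0_pderiv algebra_simps sum_subtractf)
  also have "(\<Sum>i\<le>Suc ?D. (real i + a + 1) * coeff f i * \<mu> i) = (\<Sum>i\<le>?D. (real i + a + 1) * coeff f i * \<mu> i)"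
    by (simp add: coeff_eq_0)
  also have "(\<Sum>i\<le>Suc ?D. coeff (pCons 0 f) i * \<mu> i) = (\<Sum>i\<le>?D. coeff f i * \<mu> (Suc i))"
    by (subst sum.atMost_Suc_shift) simp
  also have "(\<Sum>i\<le>?D. (real i + a + 1) * coeff f i * \<mu> i) - (\<Sum>i\<le>?D. coeff f i * \<mu> (Suc i))
      = (\<Sum>i\<le>?D. - t * c * (coeff f i * t ^ i))"
    by (subst sum_subtractf[symmetric]) (rule sum.cong, simp_all add: moment_Suc algebra_simps)
  also have "\<dots> = - t * c * poly f t"
    by (simp add: poly_altdef sum_distrib_left)
  finally show ?thesis .
qed

lemma L_ladder:
  assumes deg: "degree g \<le> m"
  shows "L ((pCons 0 (pderiv (P m)) - pCons 0 (P m)) * g)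
     = - t * c * poly (P m) t * poly g t - (real m + a + 1) * coeff g m * h m"
proof -
  have product_rule: "pCons 0 (pderiv (P m * g)) + smult (a + 1) (P m * g) - pCons 0 (P m * g)
     = (pCons 0 (pderiv (P m)) - pCons 0 (P m)) * g + P m * pCons 0 (pderiv g) + smult (a + 1) (P m * g)"
    by (simp add: pderiv_mult algebra_simps)
  have "L (P m * pCons 0 (pderiv g)) = real m * coeff g m * h m"
    using L_orth_poly_degree_le[OF order.trans[OF degree_pCons_0_pderiv_le deg]]
    by (simp add: coeff_pCons_0_pderiv)
  then show ?thesis
    using L_pearson[of "P m * g"] L_orth_poly_degree_le[OF deg]
    unfolding product_rule moment_functional_add moment_functional_smult by (simp add: algebra_simps)
qed

lemma L_x_orth_poly_sq: "L (pCons 0 (P k) * P k) = (2 * real k + a + 1) * h k + t * c * (poly (P k) t)\<^sup>2"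
proof -
  have "L (pCons 0 (pderiv (P k)) * P k) = real k * h k"
    using L_orth_poly_degree_le[of "pCons 0 (pderiv (P k))" k] degree_pCons_0_pderiv_le[of "P k"]
    by (simp add: coeff_pCons_0_pderiv mult.commute)
  moreover have "L (pCons 0 (pderiv (P k)) * P k) - L (pCons 0 (P k) * P k)
      = - t * c * (poly (P k) t)\<^sup>2 - (real k + a + 1) * h k"
    using L_ladder[of "P k" k] unfolding left_diff_distrib moment_functional_diff
    by (simp add: power2_eq_square)
  ultimately show ?thesis
    by (simp add: algebra_simps)
qed

text \<open>The coefficient \<open>p(n)\<close> of \<open>x\<^sup>n\<^sup>-\<^sup>1\<close> in \<open>P n\<close>; the guard avoids
  \<open>coeff (P 0) (0 - 1) = 1\<close>.\<close>
definition subleading :: "nat \<Rightarrow> real" where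
  "subleading k = (if k = 0 then 0 else coeff (P k) (k - 1))"

definition R :: "nat \<Rightarrow> real" where
  "R k = c * (poly (P k) t)\<^sup>2 / h k"

definition r :: "nat \<Rightarrow> real" where
  "r n = c * poly (P n) t * poly (P (n - 1)) t / h (n - 1)"

definition beta :: "nat \<Rightarrow> real" where
  "beta n = h n / h (n - 1)"

lemma subleading_Suc: "subleading (Suc k) = subleading k - L (pCons 0 (P k) * P k) / h k"
proof -
  define Q where "Q = pCons 0 (P k) - P (Suc k)"
  have "degree Q \<le> Suc k" "coeff Q (Suc k) = 0"
    unfolding Q_def using degree_pCons_le[of 0 "P k"] by (auto intro: degree_diff_le)
  then have deg: "degree Q \<le> k"
    by (rule degree_le_Suc_coeff_0)
  have "L (pCons 0 (P k) * P k) = L (P k * Q)"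
    using L_orth_poly_orth_poly[of k "Suc k"]
    by (simp add: Q_def right_diff_distrib moment_functional_diff mult.commute)
  also have "\<dots> = coeff Q k * h k"
    by (rule L_orth_poly_degree_le[OF deg])
  also have "coeff Q k = subleading k - subleading (Suc k)"
    unfolding Q_def subleading_def by (cases k) auto
  finally show ?thesis
    using h_pos[of k] by (simp add: field_simps)
qed

lemma subleading_eq: "subleading n = - (real n * (real n + a) + t * (\<Sum>k<n. R k))"
proof (induction n)
  case (Suc n)
  have "L (pCons 0 (P n) * P n) / h n = 2 * real n + a + 1 + t * R n"
    using h_pos[of n] L_x_orth_poly_sq[of n] by (simp add: R_def field_simps)
  then show ?case
    using Suc by (simp add: subleading_Suc algebra_simps)
qed (simp add: subleading_def)

lemma subleading_add_beta: "subleading (Suc m) + beta (Suc m) = t * r (Suc m)"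
proof -
  let ?n = "Suc m"
  define q where "q = pCons 0 (pderiv (P ?n)) - smult (real ?n) (P ?n)"
  have "degree q \<le> Suc m" "coeff q (Suc m) = 0"
    unfolding q_def using degree_pCons_0_pderiv_le[of "P ?n"]
    by (auto intro!: degree_diff_le order.trans[OF degree_smult_le] simp: coeff_pderiv)
  then have deg: "degree q \<le> m"
    by (rule degree_le_Suc_coeff_0)
  have orth: "L (P m * P ?n) = 0"
    using L_orth_poly_orth_poly[of m ?n] by (simp add: mult.commute)
  have "L (pCons 0 (pderiv (P ?n)) * P m) = L (P m * q)"
    using orth by (simp add: q_def right_diff_distrib moment_functional_diff moment_functional_smult mult.commute)
  also have "\<dots> = coeff q m * h m"
    by (rule L_orth_poly_degree_le[OF deg])
  also have "coeff q m = - subleading ?n"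
    by (simp add: q_def coeff_pCons_0_pderiv subleading_def algebra_simps)
  finally have xderiv: "L (pCons 0 (pderiv (P ?n)) * P m) = - subleading ?n * h m" .
  have x: "L (pCons 0 (P ?n) * P m) = h ?n"
    using L_orth_poly_degree_le[of "pCons 0 (P m)" ?n] degree_pCons_le[of 0 "P m"]
    by (simp add: mult.commute)
  have "L (pCons 0 (pderiv (P ?n)) * P m) - L (pCons 0 (P ?n) * P m)
      = - t * c * poly (P ?n) t * poly (P m) t"
    using L_ladder[of "P m" ?n] unfolding left_diff_distrib moment_functional_diff
    by (simp add: coeff_eq_0)
  then have "- subleading ?n * h m - h ?n = - t * c * poly (P ?n) t * poly (P m) t"
    unfolding xderiv x .
  then show ?thesis
    using h_pos[of m] by (simp add: r_def beta_def field_simps)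
qed

lemma L_times_x_minus_t:
  assumes deg: "degree Z \<le> m"
    and repr: "\<And>g. degree g \<le> m \<Longrightarrow> L (Z * g) = \<gamma> * poly g t"
    and g: "degree g \<le> m"
  shows "L (Z * ([:-t, 1:] * g)) = - \<gamma> * coeff g m * poly (P (Suc m)) t"
proof -
  define G where "G = [:-t, 1:] * g - smult (coeff g m) (P (Suc m))"
  have "degree G \<le> Suc m" "coeff G (Suc m) = 0"
    unfolding G_def using degree_mult_le[of "[:-t, 1:]" g] g
    by (auto intro!: degree_diff_le order.trans[OF degree_smult_le] simp: coeff_eq_0)
  then have "degree G \<le> m"
    by (rule degree_le_Suc_coeff_0)
  then have "L (Z * G) = - \<gamma> * coeff g m * poly (P (Suc m)) t"
    using repr by (simp add: G_def)
  moreover have "L (Z * P (Suc m)) = 0"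
    using L_orth_poly_lower_degree[of Z "Suc m"] deg by (simp add: mult.commute)
  moreover have "Z * ([:-t, 1:] * g) = smult (coeff g m) (Z * P (Suc m)) + Z * G"
    by (simp add: G_def algebra_simps)
  ultimately show ?thesis
    by (simp add: moment_functional_add moment_functional_smult)
qed

text \<open>A polynomial \<open>Z\<close> of degree \<open>\<le> m\<close> representing \<open>\<gamma>\<close> times evaluation at \<open>t\<close> is \<open>\<gamma>\<close>
  times the Christoffel--Darboux kernel \<open>K\<^sub>m(x, t)\<close>; the conclusion is the Christoffel--Darboux
  formula for that kernel.\<close>
lemma christoffel_darboux_representer:
  assumes deg: "degree Z \<le> m"
    and repr: "\<And>g. degree g \<le> m \<Longrightarrow> L (Z * g) = \<gamma> * poly g t"
  shows "[:-t, 1:] * Z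
    = smult (\<gamma> / h m) (smult (poly (P m) t) (P (Suc m)) - smult (poly (P (Suc m)) t) (P m))"
proof -
  define U where "U = [:-t, 1:] * Z
    - smult (\<gamma> / h m) (smult (poly (P m) t) (P (Suc m)) - smult (poly (P (Suc m)) t) (P m))"
  have hm: "h m > 0"
    by (rule h_pos)
  have "coeff Z m * h m = \<gamma> * poly (P m) t"
    using L_orth_poly_degree_le[OF deg] repr[of "P m"] by (simp add: mult.commute)
  then have "coeff U (Suc m) = 0"
    unfolding U_def using deg hm by (simp add: coeff_eq_0 field_simps)
  moreover have "degree U \<le> Suc m"
    unfolding U_def using degree_mult_le[of "[:-t, 1:]" Z] deg
    by (intro degree_diff_le order.trans[OF degree_smult_le]) (auto intro: order.trans[OF degree_smult_le])
  ultimately have "degree U \<le> m"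
    by (rule degree_le_Suc_coeff_0[rotated])
  moreover have "L (U * g) = 0" if g: "degree g \<le> m" for g
  proof -
    have "U * g = Z * ([:-t, 1:] * g) - smult (\<gamma> / h m)
        (smult (poly (P m) t) (P (Suc m) * g) - smult (poly (P (Suc m)) t) (P m * g))"
      unfolding U_def by (simp add: algebra_simps)
    then have "L (U * g) = L (Z * ([:-t, 1:] * g))
        - \<gamma> / h m * (poly (P m) t * L (P (Suc m) * g) - poly (P (Suc m)) t * L (P m * g))"
      by (simp only: moment_functional_diff moment_functional_smult)
    also have "\<dots> = 0"
      using L_times_x_minus_t[OF deg repr g] L_orth_poly_degree_le[OF g]
        L_orth_poly_lower_degree[of g "Suc m"] g hm
      by (simp add: field_simps)
    finally show ?thesis .
  qed
  ultimately have "U = 0"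
    by (rule L_vanishing_on_degree_le)
  then show ?thesis
    by (simp add: U_def)
qed

lemma L_lowering_times:
  assumes g: "degree g \<le> m"
  shows "L ((pCons 0 (pderiv (P (Suc m))) - smult (real (Suc m)) (P (Suc m)) - smult (beta (Suc m)) (P m)) * g)
    = (- t * c * poly (P (Suc m)) t) * poly g t"
proof -
  let ?n = "Suc m"
  have "(pCons 0 (pderiv (P ?n)) - smult (real ?n) (P ?n) - smult (beta ?n) (P m)) * g
      = (pCons 0 (pderiv (P ?n)) - pCons 0 (P ?n)) * g + P ?n * pCons 0 g
        - smult (real ?n) (P ?n * g) - smult (beta ?n) (P m * g)"
    by (simp add: algebra_simps)
  then have "L ((pCons 0 (pderiv (P ?n)) - smult (real ?n) (P ?n) - smult (beta ?n) (P m)) * g)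
      = L ((pCons 0 (pderiv (P ?n)) - pCons 0 (P ?n)) * g) + L (P ?n * pCons 0 g)
        - real ?n * L (P ?n * g) - beta ?n * L (P m * g)"
    by (simp only: moment_functional_add moment_functional_diff moment_functional_smult)
  moreover have "L ((pCons 0 (pderiv (P ?n)) - pCons 0 (P ?n)) * g) = - t * c * poly (P ?n) t * poly g t"
    using L_ladder[of g ?n] g by (simp add: coeff_eq_0)
  moreover have "L (P ?n * pCons 0 g) = coeff g m * h ?n"
    using L_orth_poly_degree_le[of "pCons 0 g" ?n] g by simp
  moreover have "L (P ?n * g) = 0"
    using L_orth_poly_lower_degree[of g ?n] g by simp
  moreover have "beta ?n * L (P m * g) = coeff g m * h ?n"
    using L_orth_poly_degree_le[OF g] h_pos[of m] by (simp add: beta_def)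
  ultimately show ?thesis
    by simp
qed

lemma L_raising_times:
  assumes g: "degree g \<le> m"
  shows "L ((pCons 0 (pderiv (P m)) - pCons 0 (P m) + P (Suc m) + smult (real (Suc m) + a) (P m)) * g)
    = (- t * c * poly (P m) t) * poly g t"
proof -
  have "(pCons 0 (pderiv (P m)) - pCons 0 (P m) + P (Suc m) + smult (real (Suc m) + a) (P m)) * g
      = (pCons 0 (pderiv (P m)) - pCons 0 (P m)) * g + P (Suc m) * g + smult (real (Suc m) + a) (P m * g)"
    by (simp add: algebra_simps)
  then have "L ((pCons 0 (pderiv (P m)) - pCons 0 (P m) + P (Suc m) + smult (real (Suc m) + a) (P m)) * g)
      = L ((pCons 0 (pderiv (P m)) - pCons 0 (P m)) * g) + L (P (Suc m) * g) + (real (Suc m) + a) * L (P m * g)"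
    by (simp only: moment_functional_add moment_functional_smult)
  moreover have "L (P (Suc m) * g) = 0"
    using L_orth_poly_lower_degree[of g "Suc m"] g by simp
  ultimately show ?thesis
    using L_ladder[OF g] L_orth_poly_degree_le[OF g] by (simp add: algebra_simps)
qed

lemma lowering_identity:
  "(real (Suc m) + r (Suc m)) * poly (P (Suc m)) 0 = beta (Suc m) * (R (Suc m) - 1) * poly (P m) 0"
proof -
  let ?n = "Suc m"
  define Y where "Y = pCons 0 (pderiv (P ?n)) - smult (real ?n) (P ?n) - smult (beta ?n) (P m)"
  have "degree Y \<le> Suc m"
    unfolding Y_def using degree_pCons_0_pderiv_le[of "P ?n"]
    by (intro degree_diff_le) (auto intro: order.trans[OF degree_smult_le] simp del: degree_pCons_eq_if)
  moreover have "coeff Y (Suc m) = 0"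
    by (simp add: Y_def coeff_pderiv coeff_eq_0)
  ultimately have "degree Y \<le> m"
    by (rule degree_le_Suc_coeff_0)
  moreover have "\<And>g. degree g \<le> m \<Longrightarrow> L (Y * g) = (- t * c * poly (P ?n) t) * poly g t"
    unfolding Y_def by (rule L_lowering_times)
  ultimately have "[:-t, 1:] * Y = smult (- t * c * poly (P ?n) t / h m)
      (smult (poly (P m) t) (P ?n) - smult (poly (P ?n) t) (P m))"
    by (rule christoffel_darboux_representer)
  then
  have "- t * poly Y 0 = - t * (c * poly (P ?n) t / h m
      * (poly (P m) t * poly (P ?n) 0 - poly (P ?n) t * poly (P m) 0))"
    by (drule_tac arg_cong[where f = "\<lambda>p. poly p 0"]) (simp add: algebra_simps)
  then have "poly Y 0 = c * poly (P ?n) t / h m * (poly (P m) t * poly (P ?n) 0 - poly (P ?n) t * poly (P m) 0)"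
    using t_pos by (metis mult_cancel_left neg_equal_0_iff_equal less_irrefl)
  then have "h m * poly Y 0 = c * poly (P ?n) t * (poly (P m) t * poly (P ?n) 0 - poly (P ?n) t * poly (P m) 0)"
    using h_pos[of m] by simp
  moreover have "h m * beta ?n = h ?n"
    using h_pos[of m] by (simp add: beta_def)
  ultimately have "(real ?n * h m + c * poly (P ?n) t * poly (P m) t) * poly (P ?n) 0
      = (c * (poly (P ?n) t)\<^sup>2 - h ?n) * poly (P m) 0"
    by (simp add: Y_def algebra_simps power2_eq_square)
  moreover have "(real ?n + r ?n) * poly (P ?n) 0
      = (real ?n * h m + c * poly (P ?n) t * poly (P m) t) * poly (P ?n) 0 / h m"
    using h_pos[of m] by (simp add: r_def field_simps)
  moreover have "beta ?n * (R ?n - 1) * poly (P m) 0 = (c * (poly (P ?n) t)\<^sup>2 - h ?n) * poly (P m) 0 / h m"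
    using h_pos[of m] h_pos[of ?n] by (simp add: beta_def R_def field_simps)
  ultimately show ?thesis
    by simp
qed

lemma raising_identity:
  "(real (Suc m) + a + r (Suc m)) * poly (P m) 0 = (R m - 1) * poly (P (Suc m)) 0"
proof -
  let ?n = "Suc m"
  define Z where "Z = pCons 0 (pderiv (P m)) - pCons 0 (P m) + P ?n + smult (real ?n + a) (P m)"
  have "degree Z \<le> Suc m"
    unfolding Z_def using degree_pCons_0_pderiv_le[of "P m"] degree_pCons_le[of 0 "P m"]
    by (intro degree_add_le degree_diff_le) (auto intro: order.trans[OF degree_smult_le] simp del: degree_pCons_eq_if)
  moreover have "coeff Z (Suc m) = 0"
    by (simp add: Z_def coeff_pderiv coeff_eq_0)
  ultimately have "degree Z \<le> m"
    by (rule degree_le_Suc_coeff_0)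
  moreover have "\<And>g. degree g \<le> m \<Longrightarrow> L (Z * g) = (- t * c * poly (P m) t) * poly g t"
    unfolding Z_def by (rule L_raising_times)
  ultimately have "[:-t, 1:] * Z = smult (- t * c * poly (P m) t / h m)
      (smult (poly (P m) t) (P ?n) - smult (poly (P ?n) t) (P m))"
    by (rule christoffel_darboux_representer)
  then
  have "- t * poly Z 0 = - t * (c * poly (P m) t / h m
      * (poly (P m) t * poly (P ?n) 0 - poly (P ?n) t * poly (P m) 0))"
    by (drule_tac arg_cong[where f = "\<lambda>p. poly p 0"]) (simp add: algebra_simps)
  then have "poly Z 0 = c * poly (P m) t / h m * (poly (P m) t * poly (P ?n) 0 - poly (P ?n) t * poly (P m) 0)"
    using t_pos by (metis mult_cancel_left neg_equal_0_iff_equal less_irrefl)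
  then show ?thesis
    using h_pos[of m]
    by (simp add: Z_def r_def R_def field_simps power2_eq_square)
qed

lemma r_Suc_sq: "(r (Suc m))\<^sup>2 = beta (Suc m) * R (Suc m) * R m"
  using h_pos[of m] h_pos[of "Suc m"] by (simp add: r_def beta_def R_def field_simps power2_eq_square)

lemma compatibility:
  "real (Suc m) * (real (Suc m) + a) + r (Suc m) * (2 * real (Suc m) + a) = beta (Suc m) * (1 - R (Suc m) - R m)"
proof -
  let ?n = "Suc m"
  have "(real ?n + r ?n) * (real ?n + a + r ?n) * poly (P ?n) 0
      = beta ?n * (R ?n - 1) * ((real ?n + a + r ?n) * poly (P m) 0)"
    using lowering_identity[of m] by (metis mult.commute mult.left_commute)
  also have "\<dots> = beta ?n * (R ?n - 1) * (R m - 1) * poly (P ?n) 0"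
    using raising_identity[of m] by simp
  finally have "(real ?n + r ?n) * (real ?n + a + r ?n) = beta ?n * (R ?n - 1) * (R m - 1)"
    using poly_orth_poly_0_nonzero[of ?n] by simp
  then show ?thesis
    using r_Suc_sq[of m] by (simp add: algebra_simps power2_eq_square)
qed

text \<open>By \<open>Hn_eq_sum\<close> below, this is the paper's \<open>H\<^sub>n = t (ln D\<^sub>n)'\<close>.\<close>
definition H :: "nat \<Rightarrow> real" where
  "H k = - t * (\<Sum>j<k. R j)"

lemma t_R_eq_H_diff: "t * R n = H n - H (Suc n)"
  by (simp add: H_def algebra_simps)

lemma beta_eq_H: "beta (Suc m) = real (Suc m) * (real (Suc m) + a) + t * r (Suc m) - H (Suc m)"
  using subleading_add_beta[of m] subleading_eq[of "Suc m"] by (simp add: H_def)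

lemma t_r_H_relation:
  "t * r (Suc m) * (t + H (Suc (Suc m)) - H m - 2 * real (Suc m) - a)
    = (H (Suc m) - real (Suc m) * (real (Suc m) + a)) * (t + H (Suc (Suc m)) - H m)
      + t * real (Suc m) * (real (Suc m) + a)"
proof -
  let ?n = "Suc m"
  let ?K = "real ?n * (real ?n + a)"
  have H_diff: "H (Suc ?n) = H m - t * (R ?n + R m)"
    by (simp add: H_def algebra_simps)
  have t_r: "t * r ?n = beta ?n - ?K + H ?n"
    using beta_eq_H[of m] by simp
  have r_lin: "r ?n * (2 * real ?n + a) = beta ?n * (1 - R ?n - R m) - ?K"
    using compatibility[of m] by simp
  have "t * r ?n * (t + H (Suc ?n) - H m - 2 * real ?n - a)
      = t * (1 - R ?n - R m) * (t * r ?n) - t * (r ?n * (2 * real ?n + a))"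
    unfolding H_diff by (simp add: algebra_simps)
  also have "\<dots> = t * (1 - R ?n - R m) * (beta ?n - ?K + H ?n) - t * (beta ?n * (1 - R ?n - R m) - ?K)"
    unfolding t_r r_lin ..
  also have "\<dots> = (H ?n - ?K) * (t + H (Suc ?n) - H m) + t * ?K"
    unfolding H_diff by (simp add: algebra_simps)
  finally show ?thesis
    by (simp add: algebra_simps)
qed

lemma t_r_sq_H_relation:
  "(t * r (Suc m))\<^sup>2 = (real (Suc m) * (real (Suc m) + a) + t * r (Suc m) - H (Suc m))
    * ((t * R (Suc m))\<^sup>2 + t * R (Suc m) * (H (Suc (Suc m)) + H m - 2 * H (Suc m)))"
proof -
  have "real (Suc m) * (real (Suc m) + a) + t * r (Suc m) - H (Suc m) = beta (Suc m)"
    using beta_eq_H[of m] by simp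
  moreover have "(t * R (Suc m))\<^sup>2 + t * R (Suc m) * (H (Suc (Suc m)) + H m - 2 * H (Suc m))
      = t\<^sup>2 * (R (Suc m) * R m)"
    by (simp add: H_def algebra_simps power2_eq_square)
  ultimately show ?thesis
    using r_Suc_sq[of m] by (simp add: power_mult_distrib)
qed

end

section \<open>Polynomials depending differentiably on a parameter\<close>

definition differentiable_poly_family :: "(real \<Rightarrow> real poly) \<Rightarrow> real \<Rightarrow> bool" where
  "differentiable_poly_family F t \<longleftrightarrow>
     (\<exists>N. \<forall>s. degree (F s) \<le> N) \<and> (\<forall>i. (\<lambda>s. coeff (F s) i) differentiable (at t))"

lemma differentiable_poly_family_const: "differentiable_poly_family (\<lambda>s. p) t"
  unfolding differentiable_poly_family_def by auto

lemma differentiable_poly_family_add: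
  assumes "differentiable_poly_family F t" "differentiable_poly_family G t"
  shows "differentiable_poly_family (\<lambda>s. F s + G s) t"
proof -
  from assms obtain N M where "\<And>s. degree (F s) \<le> N" "\<And>s. degree (G s) \<le> M"
    unfolding differentiable_poly_family_def by blast
  then have "\<And>s. degree (F s + G s) \<le> max N M"
    by (meson degree_add_le le_max_iff_disj)
  with assms show ?thesis
    unfolding differentiable_poly_family_def by auto
qed

lemma differentiable_poly_family_smult:
  assumes "f differentiable (at t)" "differentiable_poly_family F t"
  shows "differentiable_poly_family (\<lambda>s. smult (f s) (F s)) t"
proof -
  from assms obtain N where "\<And>s. degree (F s) \<le> N"
    unfolding differentiable_poly_family_def by blast
  then have "\<And>s. degree (smult (f s) (F s)) \<le> N"
    by (meson degree_smult_le order.trans)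
  with assms show ?thesis
    unfolding differentiable_poly_family_def by auto
qed

lemma differentiable_poly_family_diff:
  assumes "differentiable_poly_family F t" "differentiable_poly_family G t"
  shows "differentiable_poly_family (\<lambda>s. F s - G s) t"
  using differentiable_poly_family_add[OF assms(1) differentiable_poly_family_smult[of "\<lambda>s. -1" t G]] assms(2)
  by simp

lemma differentiable_poly_family_sum:
  "finite S \<Longrightarrow> (\<And>j. j \<in> S \<Longrightarrow> differentiable_poly_family (F j) t)
    \<Longrightarrow> differentiable_poly_family (\<lambda>s. \<Sum>j\<in>S. F j s) t"
  by (induction S rule: finite_induct)
     (auto intro: differentiable_poly_family_add simp: differentiable_poly_family_const[of 0, simplified])

lemma differentiable_poly_family_mult:
  assumes "differentiable_poly_family F t" "differentiable_poly_family G t"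
  shows "differentiable_poly_family (\<lambda>s. F s * G s) t"
proof -
  from assms obtain N M where "\<And>s. degree (F s) \<le> N" "\<And>s. degree (G s) \<le> M"
    unfolding differentiable_poly_family_def by blast
  then have "\<And>s. degree (F s * G s) \<le> N + M"
    by (meson add_mono degree_mult_le order.trans)
  with assms show ?thesis
    unfolding differentiable_poly_family_def coeff_mult
    by (auto intro!: differentiable_sum differentiable_mult)
qed

lemma moment_functional_differentiable:
  assumes "\<And>k. (\<lambda>s. \<mu> s k) differentiable (at t)" and "differentiable_poly_family F t"
  shows "(\<lambda>s. moment_functional (\<mu> s) (F s)) differentiable (at t)"
proof -
  obtain N where "\<And>s. degree (F s) \<le> N"
    using assms(2) unfolding differentiable_poly_family_def by blast
  then have "(\<lambda>s. moment_functional (\<mu> s) (F s)) = (\<lambda>s. \<Sum>i\<le>N. coeff (F s) i * \<mu> s i)"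
    using moment_functional_eq_sum by blast
  moreover have "(\<lambda>s. \<Sum>i\<le>N. coeff (F s) i * \<mu> s i) differentiable (at t)"
    using assms unfolding differentiable_poly_family_def by (intro differentiable_sum differentiable_mult) auto
  ultimately show ?thesis
    by simp
qed

lemma differentiable_poly_family_orth_poly:
  assumes \<mu>: "\<And>k. (\<lambda>s. \<mu> s k) differentiable (at t)"
    and nonzero: "\<And>j. moment_functional (\<mu> t) (orth_poly (\<mu> t) j * orth_poly (\<mu> t) j) \<noteq> 0"
  shows "differentiable_poly_family (\<lambda>s. orth_poly (\<mu> s) n) t"
proof (induction n rule: less_induct)
  case (less n)
  show ?case
  proof (cases n)
    case (Suc m)
    have "differentiable_poly_family (\<lambda>s. monom 1 (Suc m) -
      (\<Sum>j\<le>m. smult (moment_functional (\<mu> s) (monom 1 (Suc m) * orth_poly (\<mu> s) j)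
                   / moment_functional (\<mu> s) (orth_poly (\<mu> s) j * orth_poly (\<mu> s) j)) (orth_poly (\<mu> s) j))) t"
    proof (intro differentiable_poly_family_diff differentiable_poly_family_const
        differentiable_poly_family_sum differentiable_poly_family_smult)
      fix j assume "j \<in> {..m}"
      then have IH: "differentiable_poly_family (\<lambda>s. orth_poly (\<mu> s) j) t"
        using less Suc by auto
      then show "differentiable_poly_family (\<lambda>s. orth_poly (\<mu> s) j) t" .
      show "(\<lambda>s. moment_functional (\<mu> s) (monom 1 (Suc m) * orth_poly (\<mu> s) j)
          / moment_functional (\<mu> s) (orth_poly (\<mu> s) j * orth_poly (\<mu> s) j)) differentiable at t"
        using nonzero[of j]
        by (intro differentiable_divide moment_functional_differentiable[OF \<mu>]
            differentiable_poly_family_mult IH differentiable_poly_family_const) auto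
    qed simp
    then show ?thesis
      using Suc by (simp add: orth_poly.simps(2))
  qed (simp add: differentiable_poly_family_const)
qed

section \<open>The weight \<open>x\<^sup>\<alpha> e\<^sup>-\<^sup>x (A + B \<theta>(x - t))\<close> and its moments\<close>

lemma set_integrable_laguerre_kernel:
  fixes a :: real
  assumes "a > -1"
  shows "set_integrable lborel {0..} (\<lambda>x::real. x ^ k * x powr a * exp (- x))"
proof -
  have "((\<lambda>x. x powr (real k + a + 1 - 1) / exp x) has_integral Gamma (real k + a + 1)) {0..}"
    by (rule Gamma_integral_real) (use assms in auto)
  then have "((\<lambda>x::real. x ^ k * x powr a * exp (- x)) has_integral Gamma (real k + a + 1)) {0..}"
  proof (rule has_integral_eq[rotated])
    fix x :: real
    assume "x \<in> {0..}"
    then show "x powr (real k + a + 1 - 1) / exp x = x ^ k * x powr a * exp (- x)"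
      by (cases "x = 0") (auto simp: powr_add powr_realpow exp_minus field_simps)
  qed
  then have "(\<lambda>x::real. x ^ k * x powr a * exp (- x)) absolutely_integrable_on {0..}"
    by (intro nonnegative_absolutely_integrable_1) (auto simp: integrable_on_def)
  moreover have "(\<lambda>x. indicator {0..} x *\<^sub>R (x ^ k * x powr a * exp (- x))) \<in> borel_measurable lborel"
    by measurable
  ultimately show ?thesis
    unfolding set_integrable_def by (subst (asm) integrable_completion) auto
qed

lemma poly_nonzero_beyond: "(q :: real poly) \<noteq> 0 \<Longrightarrow> \<exists>d>b. \<forall>x\<ge>d. poly q x \<noteq> 0"
proof -
  assume "q \<noteq> 0"
  then have fin: "finite (insert b {x. poly q x = 0})"
    using poly_roots_finite by blast
  show ?thesis
    using Max_ge[OF fin] by (intro exI[of _ "Max (insert b {x. poly q x = 0}) + 1"]) force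
qed

lemma set_integral_ge_indicator:
  fixes f :: "real \<Rightarrow> real"
  assumes "set_integrable lborel {0..} f" "d \<ge> 0" "\<And>y. y \<ge> 0 \<Longrightarrow> m * indicator {d..d+1} y \<le> f y"
  shows "m \<le> (LINT y:{0..}|lborel. f y)"
proof -
  have ind: "indicator {0..} y *\<^sub>R (m * indicator {d..d+1} y) = m * indicator {d..d+1} y" for y :: real
    using assms(2) by (auto split: split_indicator)
  have "set_integrable lborel {0..} (\<lambda>y. m * indicator {d..d+1} y)"
    unfolding set_integrable_def ind by (intro integrable_mult_right integrable_real_indicator) auto
  then have "(LINT y:{0..}|lborel. m * indicator {d..d+1} y) \<le> (LINT y:{0..}|lborel. f y)"
    using assms(3) by (intro set_integral_mono[OF _ assms(1)]) auto
  then show ?thesis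
    unfolding set_lebesgue_integral_def ind by simp
qed

lemma heaviside_eq_indicator: "heaviside (x - t) = indicator {t<..} x"
  by (simp add: heaviside_def indicator_def)

locale jump_laguerre_weight =
  fixes \<alpha> A B :: real
  assumes alpha_pos: "\<alpha> > 0" and A_nonneg: "A \<ge> 0" and B_pos: "B > 0"
begin

definition moment :: "real \<Rightarrow> nat \<Rightarrow> real" where
  "moment s k = (LINT x:{0..}|lborel. x ^ k * weight \<alpha> A B s x)"

definition laguerre_kernel :: "nat \<Rightarrow> real \<Rightarrow> real" where
  "laguerre_kernel k x = x ^ k * x powr \<alpha> * exp (- x)"

lemma set_integrable_kernel: "set_integrable lborel {0..} (laguerre_kernel k)"
  unfolding laguerre_kernel_def using set_integrable_laguerre_kernel[of \<alpha> k] alpha_pos by simp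

lemma weight_nonneg: "x \<ge> 0 \<Longrightarrow> weight \<alpha> A B s x \<ge> 0"
  using A_nonneg B_pos unfolding weight_def heaviside_def by auto

lemma set_integrable_monomial_weight: "set_integrable lborel {0..} (\<lambda>x. x ^ k * weight \<alpha> A B s x)"
proof (rule set_integrable_bound[where f = "\<lambda>x. (A + B) * laguerre_kernel k x"])
  show "set_integrable lborel {0..} (\<lambda>x. (A + B) * laguerre_kernel k x)"
    using set_integrable_kernel by (rule set_integrable_mult_right)
  show "set_borel_measurable lborel {0..} (\<lambda>x. x ^ k * weight \<alpha> A B s x)"
    unfolding set_borel_measurable_def weight_def heaviside_def by measurable
  have "\<bar>x ^ k * weight \<alpha> A B s x\<bar> \<le> \<bar>(A + B) * laguerre_kernel k x\<bar>" if "x \<ge> 0" for x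
    using that A_nonneg B_pos
    by (auto simp: weight_def heaviside_def laguerre_kernel_def algebra_simps
             intro!: mult_left_mono mult_nonneg_nonneg)
  then show "AE x in lborel. x \<in> {0..} \<longrightarrow> norm (x ^ k * weight \<alpha> A B s x) \<le> norm ((A + B) * laguerre_kernel k x)"
    by auto
qed

lemma poly_weight_eq_sum:
  "indicator {0..} x *\<^sub>R (poly p x * weight \<alpha> A B s x)
    = (\<Sum>i\<le>degree p. coeff p i * (indicator {0..} x *\<^sub>R (x ^ i * weight \<alpha> A B s x)))"
  by (simp add: poly_altdef sum_distrib_left sum_distrib_right algebra_simps)

lemma set_integrable_poly_weight: "set_integrable lborel {0..} (\<lambda>x. poly p x * weight \<alpha> A B s x)"
  unfolding set_integrable_def poly_weight_eq_sum
  using set_integrable_monomial_weight[unfolded set_integrable_def] by auto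

lemma integral_poly_weight: "(LINT x:{0..}|lborel. poly p x * weight \<alpha> A B s x) = moment_functional (moment s) p"
  unfolding set_lebesgue_integral_def poly_weight_eq_sum moment_functional_def moment_def
  using set_integrable_monomial_weight[unfolded set_integrable_def] by simp

lemma wip_eq_moment_functional: "wip \<alpha> A B s p q = moment_functional (moment s) (p * q)"
  unfolding wip_def by (simp add: integral_poly_weight[symmetric])

text \<open>Beyond the last root of \<open>q\<close> and beyond \<open>s\<close>, the integrand is bounded below on a unit
  interval by a positive constant.\<close>
lemma moment_functional_moment_pos:
  assumes q: "q \<noteq> 0" and nonneg: "\<forall>x\<ge>0. poly q x \<ge> 0"
  shows "moment_functional (moment s) q > 0"
proof -
  obtain d where d: "d > max s 0" "\<And>x. x \<ge> d \<Longrightarrow> poly q x \<noteq> 0"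
    using poly_nonzero_beyond[OF q] by blast
  define g where "g x = poly q x * ((A + B) * x powr \<alpha> * exp (- x))" for x
  have "continuous_on {d..d+1} g"
    unfolding g_def using d by (intro continuous_intros) auto
  then obtain x0 where x0: "x0 \<in> {d..d+1}" "\<And>y. y \<in> {d..d+1} \<Longrightarrow> g x0 \<le> g y"
    using continuous_attains_inf[OF compact_Icc, of d "d + 1" g] by auto
  have g_pos: "g y > 0" if "y \<in> {d..d+1}" for y
  proof -
    have "poly q y > 0"
      using nonneg d that by (metis atLeastAtMost_iff less_eq_real_def max.strict_boundedE order.trans)
    moreover have "y > 0"
      using d that by auto
    ultimately show ?thesis
      unfolding g_def using A_nonneg B_pos by (intro mult_pos_pos) auto
  qed
  have lower: "g x0 * indicator {d..d+1} y \<le> poly q y * weight \<alpha> A B s y" if "y \<ge> 0" for y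
  proof (cases "y \<in> {d..d+1}")
    case True
    then have "poly q y * weight \<alpha> A B s y = g y"
      using d unfolding g_def weight_def heaviside_def by auto
    then show ?thesis
      using True x0 by simp
  next
    case False
    then show ?thesis
      using nonneg weight_nonneg that by simp
  qed
  have "g x0 \<le> (LINT y:{0..}|lborel. poly q y * weight \<alpha> A B s y)"
    using d lower by (intro set_integral_ge_indicator[where d = d] set_integrable_poly_weight) auto
  then show ?thesis
    using g_pos[OF x0(1)] integral_poly_weight[of q s] by linarith
qed

lemma positive_moments: "positive_moments (moment s)"
  by unfold_locales (rule moment_functional_moment_pos)

lemma moment_eq_split:
  assumes "s \<ge> 0"
  shows "moment s k = A * (LINT x:{0..}|lborel. laguerre_kernel k x) + B * (LINT x:{s<..}|lborel. laguerre_kernel k x)"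
proof -
  have split: "x ^ k * weight \<alpha> A B s x = A * laguerre_kernel k x + B * (laguerre_kernel k x * indicator {s<..} x)" for x
    unfolding weight_def laguerre_kernel_def heaviside_eq_indicator by (simp add: algebra_simps)
  have restrict: "indicator {0..} x *\<^sub>R (laguerre_kernel k x * indicator {s<..} x)
      = indicator {s<..} x *\<^sub>R laguerre_kernel k x" for x
    using assms by (auto split: split_indicator)
  have "set_integrable lborel {s<..} (laguerre_kernel k)"
    using set_integrable_kernel by (rule set_integrable_subset) (use assms in auto)
  then have "set_integrable lborel {0..} (\<lambda>x. laguerre_kernel k x * indicator {s<..} x)"
    unfolding set_integrable_def restrict .
  moreover have "(LINT x:{0..}|lborel. laguerre_kernel k x * indicator {s<..} x)
      = (LINT x:{s<..}|lborel. laguerre_kernel k x)"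
    unfolding set_lebesgue_integral_def restrict ..
  ultimately show ?thesis
    unfolding moment_def split using set_integrable_kernel by (subst set_integral_add) auto
qed

lemma continuous_on_laguerre_kernel: "continuous_on {0..} (laguerre_kernel k)"
  unfolding laguerre_kernel_def using alpha_pos by (intro continuous_intros continuous_on_powr') auto

lemma laguerre_kernel_Suc_has_derivative:
  assumes "x > 0"
  shows "(laguerre_kernel (Suc k) has_real_derivative
    (real k + 1 + \<alpha>) * laguerre_kernel k x - laguerre_kernel (Suc k) x) (at x)"
proof -
  have "x ^ Suc k * x powr (\<alpha> - 1) = x ^ k * x powr \<alpha>"
    using assms by (simp add: powr_diff field_simps)
  then show ?thesis
    unfolding laguerre_kernel_def using assms
    by (auto intro!: derivative_eq_intros simp: algebra_simps power_eq_if[of x k])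
qed

lemma integral_laguerre_kernel_Suc_Ioi:
  assumes "a \<ge> 0"
  shows "(LINT x:{a<..}|lborel. laguerre_kernel (Suc k) x)
    = (real k + 1 + \<alpha>) * (LINT x:{a<..}|lborel. laguerre_kernel k x) + laguerre_kernel (Suc k) a"
proof -
  have integrable: "set_integrable lborel {a<..} (laguerre_kernel j)" for j
    using set_integrable_kernel by (rule set_integrable_subset) (use assms in auto)
  let ?f = "\<lambda>x. (real k + 1 + \<alpha>) * laguerre_kernel k x - laguerre_kernel (Suc k) x"
  have "(LBINT x=ereal a..\<infinity>. ?f x) = 0 - laguerre_kernel (Suc k) a"
  proof (rule interval_integral_FTC_integrable)
    fix x
    assume "ereal a < ereal x"
    then have "x > 0"
      using assms by simp
    then show "(laguerre_kernel (Suc k) has_vector_derivative ?f x) (at x)" "isCont ?f x"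
      using laguerre_kernel_Suc_has_derivative[of x k]
      by (auto simp: has_real_derivative_iff_has_vector_derivative laguerre_kernel_def intro!: continuous_intros)
  next
    show "set_integrable lborel (einterval (ereal a) \<infinity>) ?f"
      using integrable[of k] integrable[of "Suc k"] by (auto intro!: set_integral_diff(1) set_integrable_mult_right)
    have "(laguerre_kernel (Suc k) \<longlongrightarrow> laguerre_kernel (Suc k) a) (at_right a)"
      using continuous_on_laguerre_kernel[of "Suc k"] assms
      by (auto simp: continuous_on_def intro: tendsto_within_subset)
    then show "((laguerre_kernel (Suc k) \<circ> real_of_ereal) \<longlongrightarrow> laguerre_kernel (Suc k) a) (at_right (ereal a))"
      by (simp add: ereal_tendsto_simps)
    have "(laguerre_kernel (Suc k) \<longlongrightarrow> 0) at_top"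
      unfolding laguerre_kernel_def by real_asymp
    then show "((laguerre_kernel (Suc k) \<circ> real_of_ereal) \<longlongrightarrow> 0) (at_left \<infinity>)"
      by (simp add: ereal_tendsto_simps)
  qed simp
  then show ?thesis
    using integrable[of k] integrable[of "Suc k"]
    by (simp add: interval_lebesgue_integral_def set_integral_diff(2) set_integral_mult_right)
qed

lemma laguerre_kernel_Suc_0 [simp]: "laguerre_kernel (Suc k) 0 = 0"
  by (simp add: laguerre_kernel_def)

lemma integral_laguerre_kernel_Ici_eq_Ioi:
  "(LINT x:{0..}|lborel. laguerre_kernel k x) = (LINT x:{0<..}|lborel. laguerre_kernel k x)"
proof -
  have "indicator {0..} x *\<^sub>R laguerre_kernel k x = indicator {0<..} x *\<^sub>R laguerre_kernel k x" for x
    using alpha_pos by (auto simp: laguerre_kernel_def split: split_indicator)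
  then show ?thesis
    unfolding set_lebesgue_integral_def by presburger
qed

lemma moment_Suc:
  assumes "t > 0"
  shows "moment t (Suc k) = (real k + \<alpha> + 1) * moment t k + (B * t powr \<alpha> * exp (- t)) * t ^ Suc k"
proof -
  have "(LINT x:{0..}|lborel. laguerre_kernel (Suc k) x) = (real k + 1 + \<alpha>) * (LINT x:{0..}|lborel. laguerre_kernel k x)"
    using integral_laguerre_kernel_Suc_Ioi[of 0 k] by (simp add: integral_laguerre_kernel_Ici_eq_Ioi)
  moreover have "laguerre_kernel (Suc k) t = t powr \<alpha> * exp (- t) * t ^ Suc k"
    by (simp add: laguerre_kernel_def)
  ultimately show ?thesis
    using assms integral_laguerre_kernel_Suc_Ioi[of t k] by (simp add: moment_eq_split algebra_simps)
qed

end

lemma has_real_derivative_integral_Ioi: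
  assumes integrable: "set_integrable lborel {c..} f" and cont: "continuous_on {c..} f" and "c < t"
  shows "((\<lambda>s. LINT x:{s<..}|lborel. f x) has_real_derivative - f t) (at t)"
proof -
  define K where "K = (LBINT x=ereal c..\<infinity>. f x)"
  have tail: "(LINT x:{s<..}|lborel. f x) = K - (LBINT y=c..s. f y)" if "s \<ge> c" for s
  proof -
    have "interval_lebesgue_integrable lborel (ereal c) \<infinity> f"
      unfolding interval_lebesgue_integrable_def using integrable
      by (simp, rule set_integrable_subset) auto
    then have "(LBINT x=ereal c..ereal s. f x) + (LBINT x=ereal s..\<infinity>. f x) = K"
      unfolding K_def using that by (intro interval_integral_sum) (simp add: min_def max_def)
    then show ?thesis
      by (simp add: interval_integral_Ioi)
  qed
  have "((\<lambda>u. LBINT y=c..u. f y) has_vector_derivative f t) (at t within {c..t+1})"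
    using cont \<open>c < t\<close> by (intro interval_integral_FTC2) (auto intro: continuous_on_subset)
  moreover have "at t within {c..t+1} = at t"
    using \<open>c < t\<close> by (intro at_within_interior) (auto simp: interior_atLeastAtMost_real)
  ultimately have "((\<lambda>u. K - (LBINT y=c..u. f y)) has_real_derivative - f t) (at t)"
    by (auto simp: has_real_derivative_iff_has_vector_derivative intro!: derivative_eq_intros)
  moreover have "eventually (\<lambda>s. s \<in> {c<..}) (nhds t)"
    using \<open>c < t\<close> by (intro eventually_nhds_in_open) auto
  then have "eventually (\<lambda>s. (LINT x:{s<..}|lborel. f x) = K - (LBINT y=c..s. f y)) (nhds t)"
    by eventually_elim (use tail in auto)
  ultimately show ?thesis
    by (subst DERIV_cong_ev) auto
qed

context jump_laguerre_weight
begin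

lemma moment_has_derivative:
  assumes "t > 0"
  shows "((\<lambda>s. moment s k) has_real_derivative - (B * t powr \<alpha> * exp (- t)) * t ^ k) (at t)"
proof -
  have "eventually (\<lambda>s. s \<in> {0<..}) (nhds t)"
    using assms by (intro eventually_nhds_in_open) auto
  then have "eventually (\<lambda>s. moment s k = A * (LINT x:{0..}|lborel. laguerre_kernel k x)
      + B * (LINT x:{s<..}|lborel. laguerre_kernel k x)) (nhds t)"
    by eventually_elim (simp add: moment_eq_split)
  moreover have "((\<lambda>s. A * (LINT x:{0..}|lborel. laguerre_kernel k x) + B * (LINT x:{s<..}|lborel. laguerre_kernel k x))
      has_real_derivative B * (- laguerre_kernel k t)) (at t)"
    using has_real_derivative_integral_Ioi[OF set_integrable_kernel continuous_on_laguerre_kernel assms]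
    by (auto intro!: derivative_eq_intros)
  ultimately show ?thesis
    by (subst DERIV_cong_ev) (auto simp: laguerre_kernel_def algebra_simps)
qed

lemma OP_eq_orth_poly: "OP \<alpha> A B s n = orth_poly (moment s) n"
proof -
  interpret positive_moments "moment s"
    by (rule positive_moments)
  have "is_monic_OP \<alpha> A B s n = (\<lambda>p. p = P n)"
    using orth_poly_unique[of _ n] L_orth_poly_lower_degree[of _ n]
    unfolding is_monic_OP_def wip_eq_moment_functional by fastforce
  then show ?thesis
    unfolding OP_def by simp
qed

lemma hn_eq: "hn \<alpha> A B n s = positive_moments.h (moment s) n"
  unfolding hn_def OP_eq_orth_poly wip_eq_moment_functional positive_moments.h_def[OF positive_moments] ..

lemma hn_pos: "hn \<alpha> A B n s > 0"
  unfolding hn_eq by (rule positive_moments.h_pos[OF positive_moments])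

lemma moment_functional_moment_has_derivative:
  assumes "t > 0"
  shows "((\<lambda>s. moment_functional (moment s) q) has_real_derivative
    - (B * t powr \<alpha> * exp (- t)) * poly q t) (at t)"
proof -
  have "((\<lambda>s. \<Sum>i\<le>degree q. coeff q i * moment s i) has_real_derivative
      (\<Sum>i\<le>degree q. coeff q i * (- (B * t powr \<alpha> * exp (- t)) * t ^ i))) (at t)"
    by (intro DERIV_sum DERIV_cmult moment_has_derivative[OF assms])
  then show ?thesis
    unfolding moment_functional_def by (simp add: poly_altdef sum_distrib_left algebra_simps)
qed

text \<open>Since \<open>h\<^sub>j(s) \<le> L\<^sub>s(P\<^sub>j(\<cdot>, t)\<^sup>2)\<close> with equality at \<open>s = t\<close>, the difference has a
  minimum at \<open>t\<close>; so only the moments, not the polynomials, need to be differentiated.\<close>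
lemma hn_has_derivative:
  assumes t: "t > 0"
  shows "((\<lambda>s. hn \<alpha> A B j s) has_real_derivative
    - (B * t powr \<alpha> * exp (- t)) * (poly (orth_poly (moment t) j) t)\<^sup>2) (at t)"
proof -
  define Pt where "Pt = orth_poly (moment t) j"
  have moment_differentiable: "(\<lambda>s. moment s k) differentiable (at t)" for k
    using moment_has_derivative[OF t] real_differentiable_def by blast
  have "differentiable_poly_family (\<lambda>s. orth_poly (moment s) j) t"
    using hn_pos unfolding hn_eq positive_moments.h_def[OF positive_moments]
    by (intro differentiable_poly_family_orth_poly moment_differentiable) (metis less_irrefl)
  then have "(\<lambda>s. hn \<alpha> A B j s) differentiable (at t)"
    unfolding hn_eq positive_moments.h_def[OF positive_moments]
    by (intro moment_functional_differentiable moment_differentiable differentiable_poly_family_mult)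
  then obtain D where D: "((\<lambda>s. hn \<alpha> A B j s) has_real_derivative D) (at t)"
    using real_differentiable_def by blast
  have "((\<lambda>s. moment_functional (moment s) (Pt * Pt) - hn \<alpha> A B j s) has_real_derivative
      - (B * t powr \<alpha> * exp (- t)) * poly (Pt * Pt) t - D) (at t)"
    by (intro DERIV_diff D moment_functional_moment_has_derivative t)
  moreover have "moment_functional (moment t) (Pt * Pt) - hn \<alpha> A B j t
      \<le> moment_functional (moment s) (Pt * Pt) - hn \<alpha> A B j s" for s
    using positive_moments.h_le_monic[OF positive_moments, of Pt j s]
    by (simp add: Pt_def hn_eq positive_moments.h_def[OF positive_moments])
  ultimately have "- (B * t powr \<alpha> * exp (- t)) * poly (Pt * Pt) t - D = 0"
    by (intro DERIV_local_min[of _ _ t 1]) auto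
  then show ?thesis
    using D by (simp add: Pt_def power2_eq_square)
qed

lemma Hn_eq_sum:
  assumes t: "t > 0"
  shows "Hn \<alpha> A B n t
    = - t * (\<Sum>j<n. (B * t powr \<alpha> * exp (- t)) * (poly (orth_poly (moment t) j) t)\<^sup>2 / hn \<alpha> A B j t)"
proof -
  have "(\<lambda>s. ln (Dn \<alpha> A B n s)) = (\<lambda>s. \<Sum>j<n. ln (hn \<alpha> A B j s))"
    unfolding Dn_def by (intro ext ln_prod) (simp_all add: hn_pos[THEN dual_order.strict_implies_not_eq])
  moreover have "((\<lambda>s. \<Sum>j<n. ln (hn \<alpha> A B j s)) has_real_derivative
      (\<Sum>j<n. - (B * t powr \<alpha> * exp (- t)) * (poly (orth_poly (moment t) j) t)\<^sup>2 / hn \<alpha> A B j t)) (at t)"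
  proof (rule DERIV_sum)
    fix j
    show "((\<lambda>s. ln (hn \<alpha> A B j s)) has_real_derivative
        - (B * t powr \<alpha> * exp (- t)) * (poly (orth_poly (moment t) j) t)\<^sup>2 / hn \<alpha> A B j t) (at t)"
      using DERIV_chain2[OF DERIV_ln_divide[OF hn_pos[of j t]] hn_has_derivative[OF t, of j]]
      by (simp add: field_simps)
  qed
  ultimately show ?thesis
    unfolding Hn_def by (simp add: DERIV_imp_deriv sum_negf)
qed

lemma jump_laguerre_moments:
  "t > 0 \<Longrightarrow> jump_laguerre_moments (moment t) \<alpha> t (B * t powr \<alpha> * exp (- t))"
  by (intro jump_laguerre_moments.intro positive_moments jump_laguerre_moments_axioms.intro)
     (auto simp: moment_Suc algebra_simps)

end

theorem theorem7:
  fixes \<alpha> A B t :: real and n :: nat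
  assumes "\<alpha> > 0" and "A \<ge> 0" and "B > 0" and "t > 0" and "n \<ge> 1"
  shows "t * Rn \<alpha> A B n t = Hn \<alpha> A B n t - Hn \<alpha> A B (n + 1) t
     \<and> (t + Hn \<alpha> A B (n + 1) t - Hn \<alpha> A B (n - 1) t - 2 * real n - \<alpha> \<noteq> 0 \<longrightarrow>
         t * rn \<alpha> A B n t =
           ((Hn \<alpha> A B n t - real n * (real n + \<alpha>)) * (t + Hn \<alpha> A B (n + 1) t - Hn \<alpha> A B (n - 1) t)
             + t * real n * (real n + \<alpha>))
           / (t + Hn \<alpha> A B (n + 1) t - Hn \<alpha> A B (n - 1) t - 2 * real n - \<alpha>))
     \<and> (t * rn \<alpha> A B n t)\<^sup>2 =
         (real n * (real n + \<alpha>) + t * rn \<alpha> A B n t - Hn \<alpha> A B n t)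
         * ((t * Rn \<alpha> A B n t)\<^sup>2
            + t * Rn \<alpha> A B n t * (Hn \<alpha> A B (n + 1) t + Hn \<alpha> A B (n - 1) t - 2 * Hn \<alpha> A B n t))"
proof -
  interpret jump_laguerre_weight \<alpha> A B
    using assms by unfold_locales auto
  interpret M: jump_laguerre_moments "moment t" \<alpha> t "B * t powr \<alpha> * exp (- t)"
    using jump_laguerre_moments \<open>t > 0\<close> .
  obtain m where n: "n = Suc m"
    using \<open>n \<ge> 1\<close> by (cases n) auto
  have "Hn \<alpha> A B k t = M.H k" for k
    unfolding Hn_eq_sum[OF \<open>t > 0\<close>] M.H_def M.R_def hn_eq ..
  moreover have "Rn \<alpha> A B k t = M.R k" for k
    unfolding Rn_def M.R_def Pn_def OP_eq_orth_poly hn_eq by simp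
  moreover have "rn \<alpha> A B n t = M.r n"
    unfolding rn_def M.r_def Pn_def OP_eq_orth_poly hn_eq by simp
  ultimately show ?thesis
    using M.t_R_eq_H_diff[of n] M.t_r_H_relation[of m] M.t_r_sq_H_relation[of m]
    by (simp add: n eq_divide_eq)
qed

end
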